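(* For all $0<x<\pi/2$, \[ \frac{\pi^2+\frac{\pi^2-12}{3}x^2+\frac{384-4\pi^4}{3\pi^4}x^4}{\pi^2-4x^2}<\frac{\tan x}{x}<\frac{\pi^2+\frac{72-8\pi^2}{\pi^2}x^2+\frac{16\pi^2-160}{\pi^4}x^4}{\pi^2-4x^2}. \] *)

theory Defs
  imports Complex_Main
begin

end

theory Submission
  imports Defs "HOL-Analysis.Gamma_Function"
begin

text \<open>
  The reflection formula for the digamma function gives the partial fraction expansion
  \<open>tan x / x = (\<Sum>k. 8 / ((2k+1)\<^sup>2\<pi>\<^sup>2 - 4x\<^sup>2))\<close>.  In the variable \<open>u = 4x\<^sup>2/\<pi>\<^sup>2 \<in> (0,1)\<close>
  this reads \<open>\<pi>\<^sup>2 tan x / (8x) = 1/(1-u) + (\<Sum>k. 1/(M\<^sub>k - u))\<close> with \<open>M\<^sub>k = (2k+3)\<^sup>2 > 1\<close>.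
  Each term \<open>1/(M - u)\<close> is convex in \<open>u\<close>, so it lies strictly above its tangent at \<open>u = 0\<close> and
  strictly below its chord over \<open>[0,1]\<close>.  Summing these linear bounds with
  \<open>\<Sum> 1/(2k+1)\<^sup>2 = \<pi>\<^sup>2/8\<close>, \<open>\<Sum> 1/(2k+1)\<^sup>4 = \<pi>\<^sup>4/96\<close> and \<open>\<Sum> 1/((2k+3)\<^sup>2 - 1) = 1/4\<close> gives both
  bounds.  The first two sums are polygamma values at \<open>1/2\<close>, obtained by
  differentiating \<open>\<psi>(1/2 + t) - \<psi>(1/2 - t) = \<pi> tan (\<pi>t)\<close> at \<open>t = 0\<close>.
\<close>

lemma sums_less:
  fixes f g :: "nat \<Rightarrow> real"
  assumes "f sums a" "g sums b" "\<And>n. f n < g n"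
  shows "a < b"
proof -
  have "(\<lambda>n. g n - f n) sums (b - a)"
    using assms(1,2) by (rule sums_diff[rotated])
  moreover have "0 < (\<Sum>n. g n - f n)"
    using calculation assms(3) by (intro suminf_pos) (auto dest: sums_summable)
  ultimately show ?thesis
    by (simp add: sums_iff)
qed

lemma DERIV_unique_on_open:
  fixes f g :: "real \<Rightarrow> real"
  assumes "open S" "t \<in> S" "\<And>y. y \<in> S \<Longrightarrow> f y = g y"
    and "(f has_real_derivative f') (at t)" "(g has_real_derivative g') (at t)"
  shows "f' = g'"
proof -
  have "(g has_real_derivative f') (at t)"
    using has_field_derivative_transform_within_open[OF assms(4,1,2)] assms(3) by blast
  then show ?thesis
    using assms(5) by (rule DERIV_unique)
qed

lemma Gamma_reflection_real: "Gamma z * Gamma (1 - z) = pi / sin (pi * z)" for z :: real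
proof -
  have "complex_of_real (Gamma z * Gamma (1 - z)) = complex_of_real (pi / sin (pi * z))"
    using Gamma_reflection_complex[of "of_real z"]
    by (simp add: Gamma_complex_of_real [symmetric] sin_of_real [symmetric])
  then show ?thesis
    by (rule of_real_eq_iff [THEN iffD1])
qed

lemma Digamma_reflection_real:
  fixes z :: real
  assumes "z \<notin> \<int>"
  shows "Digamma (1 - z) - Digamma z = pi * cot (pi * z)"
proof -
  have not_pole: "y \<notin> \<int>\<^sub>\<le>\<^sub>0" "1 - y \<notin> \<int>\<^sub>\<le>\<^sub>0" if "y \<notin> \<int>" for y :: real
    using that nonpos_Ints_subset_Ints Ints_diff[OF Ints_1, of "1 - y"] by auto
  have sin_nz: "sin (pi * y) \<noteq> 0" if "y \<notin> \<int>" for y :: real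
    using that sin_times_pi_eq_0[of y] by (simp add: mult.commute)
  define F where "F y = Gamma y * Gamma (1 - y) * sin (pi * y)" for y :: real
  have F_deriv: "(F has_real_derivative Gamma z * Gamma (1 - z) *
      ((Digamma z - Digamma (1 - z)) * sin (pi * z) + pi * cos (pi * z))) (at z)"
    unfolding F_def using not_pole[OF assms]
    by (auto intro!: derivative_eq_intros simp: algebra_simps)
  have F_const: "F y = pi" if "y \<in> - \<int>" for y
  proof -
    have "sin (pi * y) \<noteq> 0"
      using that by (intro sin_nz) simp
    then show ?thesis
      by (simp add: F_def Gamma_reflection_real)
  qed
  have "Gamma z * Gamma (1 - z) *
      ((Digamma z - Digamma (1 - z)) * sin (pi * z) + pi * cos (pi * z)) = 0"
    using assms by (intro DERIV_unique_on_open[OF open_Compl[OF closed_Ints] _ F_const F_deriv DERIV_const]) simp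
  moreover have "Gamma z * Gamma (1 - z) \<noteq> 0"
    using not_pole[OF assms] by (simp add: Gamma_eq_zero_iff)
  ultimately have "(Digamma z - Digamma (1 - z)) * sin (pi * z) + pi * cos (pi * z) = 0"
    by simp
  then show ?thesis
    using sin_nz[OF assms] by (simp add: cot_def field_simps)
qed

lemma half_plus_minus_notin_Ints:
  fixes t :: real
  assumes "cos (pi * t) \<noteq> 0"
  shows "1/2 + t \<notin> \<int>" "1/2 - t \<notin> \<int>"
proof -
  have "sin ((1/2 + t) * pi) = cos (pi * t)" "sin ((1/2 - t) * pi) = cos (pi * t)"
    using cos_sin_eq[of "pi * t"] cos_sin_eq[of "- pi * t"] by (simp_all add: algebra_simps)
  then show "1/2 + t \<notin> \<int>" "1/2 - t \<notin> \<int>"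
    using assms sin_times_pi_eq_0 by metis+
qed

lemma Digamma_half_plus_minus:
  fixes t :: real
  assumes "cos (pi * t) \<noteq> 0"
  shows "Digamma (1/2 + t) - Digamma (1/2 - t) = pi * tan (pi * t)"
  using Digamma_reflection_real[OF half_plus_minus_notin_Ints(2)[OF assms]] tan_cot'[of "pi/2 - pi * t"]
  by (simp add: right_diff_distrib)

lemma Polygamma_half_plus_minus_has_derivative:
  fixes t :: real
  assumes "\<bar>t\<bar> < 1/2"
  shows "((\<lambda>s. Polygamma n (1/2 + s) - (-1)^n * Polygamma n (1/2 - s)) has_real_derivative
           Polygamma (Suc n) (1/2 + t) - (-1)^Suc n * Polygamma (Suc n) (1/2 - t)) (at t)"
proof -
  have "1/2 + t \<notin> \<int>\<^sub>\<le>\<^sub>0" "1/2 - t \<notin> \<int>\<^sub>\<le>\<^sub>0"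
    using assms by (auto elim!: nonpos_Ints_cases)
  then show ?thesis
    by (auto intro!: derivative_eq_intros)
qed

lemma Polygamma_half_plus_minus_eq_deriv:
  fixes h :: "real \<Rightarrow> real"
  assumes "\<And>y. \<bar>y\<bar> < 1/2 \<Longrightarrow> Polygamma n (1/2 + y) - (-1)^n * Polygamma n (1/2 - y) = h y"
    and "(h has_real_derivative h') (at t)" and "\<bar>t\<bar> < 1/2"
  shows "Polygamma (Suc n) (1/2 + t) - (-1)^Suc n * Polygamma (Suc n) (1/2 - t) = h'"
proof (rule DERIV_unique_on_open[where S = "ball 0 (1/2)"])
  show "((\<lambda>s. Polygamma n (1/2 + s) - (-1)^n * Polygamma n (1/2 - s)) has_real_derivative
      Polygamma (Suc n) (1/2 + t) - (-1)^Suc n * Polygamma (Suc n) (1/2 - t)) (at t)"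
    using assms(3) by (rule Polygamma_half_plus_minus_has_derivative)
qed (use assms in \<open>auto simp: dist_real_def\<close>)

lemma cos_pi_times_pos:
  fixes t :: real
  assumes "\<bar>t\<bar> < 1/2"
  shows "cos (pi * t) > 0"
proof (rule cos_gt_zero_pi)
  have "pi * (-1/2) < pi * t" "pi * t < pi * (1/2)"
    using assms by (intro mult_strict_left_mono; auto simp: abs_less_iff)+
  then show "- (pi / 2) < pi * t" "pi * t < pi / 2"
    by simp_all
qed

lemma Polygamma_1_half_plus_minus:
  fixes t :: real
  assumes "\<bar>t\<bar> < 1/2"
  shows "Polygamma 1 (1/2 + t) + Polygamma 1 (1/2 - t) = pi^2 / cos (pi * t)^2"
proof -
  have "Polygamma (Suc 0) (1/2 + t) - (-1)^Suc 0 * Polygamma (Suc 0) (1/2 - t) = pi^2 / cos (pi * t)^2"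
  proof (rule Polygamma_half_plus_minus_eq_deriv[where n = 0, OF _ _ assms])
    show "Polygamma 0 (1/2 + y) - (-1)^0 * Polygamma 0 (1/2 - y) = pi * tan (pi * y)"
      if "\<bar>y\<bar> < 1/2" for y :: real
      using Digamma_half_plus_minus cos_pi_times_pos[OF that] by simp
    show "((\<lambda>y. pi * tan (pi * y)) has_real_derivative pi^2 / cos (pi * t)^2) (at t)"
      using cos_pi_times_pos[OF assms]
      by (auto intro!: derivative_eq_intros simp: power2_eq_square field_simps)
  qed
  then show ?thesis
    by simp
qed

lemma Polygamma_1_one_half: "Polygamma 1 (1/2 :: real) = pi^2 / 2"
  using Polygamma_1_half_plus_minus[of 0] by simp

lemma Polygamma_3_one_half: "Polygamma 3 (1/2 :: real) = pi^4"
proof -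
  have Polygamma_two: "Polygamma 2 (1/2 + t) - Polygamma 2 (1/2 - t) =
      2 * pi^3 * sin (pi * t) / cos (pi * t)^3" if t: "\<bar>t\<bar> < 1/2" for t :: real
  proof -
    have deriv: "((\<lambda>y. pi^2 / cos (pi * y)^2) has_real_derivative
        2 * pi^3 * sin (pi * t) / cos (pi * t)^3) (at t)"
      using cos_pi_times_pos[OF t]
      by (auto intro!: derivative_eq_intros simp: field_simps power_numeral_reduce)
    have "Polygamma (Suc 1) (1/2 + t) - (-1)^Suc 1 * Polygamma (Suc 1) (1/2 - t) =
        2 * pi^3 * sin (pi * t) / cos (pi * t)^3"
      by (rule Polygamma_half_plus_minus_eq_deriv[OF _ deriv t])
        (simp add: Polygamma_1_half_plus_minus[unfolded One_nat_def])
    then show ?thesis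
      by (simp add: numeral_2_eq_2)
  qed
  have "((\<lambda>y. 2 * pi^3 * sin (pi * y) / cos (pi * y)^3) has_real_derivative 2 * pi^4) (at 0)"
    by (auto intro!: derivative_eq_intros simp: power_numeral_reduce)
  then have "Polygamma (Suc 2) (1/2 + 0) - (-1)^Suc 2 * Polygamma (Suc 2) (1/2 - 0) = (2 * pi^4 :: real)"
    by (rule Polygamma_half_plus_minus_eq_deriv[rotated]) (simp_all add: Polygamma_two)
  then show ?thesis
    by (simp add: numeral_3_eq_3)
qed

lemma sums_inverse_odd_powers:
  assumes "n > 0"
  shows "(\<lambda>k. 1 / (2 * real k + 1) ^ Suc n) sums ((-1) ^ Suc n * Polygamma n (1/2) / (fact n * 2 ^ Suc n))"
proof -
  have "(\<lambda>k. inverse ((1/2 + real k) ^ Suc n) / 2 ^ Suc n) sums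
      ((-1) ^ Suc n * Polygamma n (1/2) / fact n / 2 ^ Suc n)"
    using assms by (intro sums_divide Polygamma_LIMSEQ) auto
  moreover have "inverse ((1/2 + real k) ^ Suc n) / 2 ^ Suc n = 1 / (2 * real k + 1) ^ Suc n" for k
  proof -
    have half: "1/2 + real k = (2 * real k + 1) / 2"
      by simp
    show ?thesis
      by (simp only: half) (simp add: power_divide inverse_eq_divide)
  qed
  ultimately show ?thesis
    by simp
qed

lemma sums_inverse_odd_squares: "(\<lambda>k. 1 / (2 * real k + 1)^2) sums (pi^2 / 8)"
  using sums_inverse_odd_powers[of 1, unfolded Suc_1] by (simp add: Polygamma_1_one_half[unfolded One_nat_def])

lemma sums_inverse_odd_fourth_powers: "(\<lambda>k. 1 / (2 * real k + 1)^4) sums (pi^4 / 96)"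
  using sums_inverse_odd_powers[of 3] by (simp add: Polygamma_3_one_half fact_numeral)

lemma sums_inverse_odd_squares_minus_one: "(\<lambda>k. 1 / ((2 * real k + 3)^2 - 1)) sums (1/4)"
proof -
  define h where "h k = inverse (real (Suc k)) / 4" for k :: nat
  have "h \<longlonglongrightarrow> 0"
    unfolding h_def by (intro tendsto_divide_zero LIMSEQ_inverse_real_of_nat)
  then have "(\<lambda>k. h k - h (Suc k)) sums (1/4)"
    using telescope_sums' by (fastforce simp: h_def)
  moreover have "h k - h (Suc k) = 1 / ((2 * real k + 3)^2 - 1)" for k
  proof -
    have denom: "(2 * real k + 3)^2 - 1 = 4 * (real k + 1) * (real k + 2)"
      by (simp add: power2_eq_square algebra_simps)
    have "h k - h (Suc k) = 1 / (4 * (real k + 1) * (real k + 2))"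
      by (simp add: h_def divide_simps) (simp add: algebra_simps)
    then show ?thesis
      by (simp only: denom)
  qed
  ultimately show ?thesis
    by simp
qed

lemma tan_partial_fractions:
  fixes x :: real
  assumes "cos x \<noteq> 0"
  shows "(\<lambda>k. 8 * x / ((2 * real k + 1)^2 * pi^2 - 4 * x^2)) sums tan x"
proof -
  define t where "t = x / pi"
  have x: "x = pi * t"
    by (simp add: t_def)
  have cos_t: "cos (pi * t) \<noteq> 0"
    using assms by (simp add: x)
  have not_int: "1/2 + t \<notin> \<int>" "1/2 - t \<notin> \<int>"
    using half_plus_minus_notin_Ints[OF cos_t] .
  have nz: "1/2 + t + real k \<noteq> 0" "1/2 - t + real k \<noteq> 0" for k
  proof -
    have "- real k \<in> \<int>"
      by simp
    moreover have "1/2 + t = - real k" if "1/2 + t + real k = 0"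
      using that by linarith
    moreover have "1/2 - t = - real k" if "1/2 - t + real k = 0"
      using that by linarith
    ultimately show "1/2 + t + real k \<noteq> 0" "1/2 - t + real k \<noteq> 0"
      using not_int by metis+
  qed
  have "(\<lambda>k. inverse (real (Suc k)) - inverse (1/2 + t + real k)) sums (Digamma (1/2 + t) + euler_mascheroni)"
    "(\<lambda>k. inverse (real (Suc k)) - inverse (1/2 - t + real k)) sums (Digamma (1/2 - t) + euler_mascheroni)"
    using summable_Digamma[of "1/2 + t"] summable_Digamma[of "1/2 - t"] nz[of 0]
    by (simp_all add: Digamma_def summable_sums)
  from sums_diff[OF this]
  have "(\<lambda>k. inverse (1/2 - t + real k) - inverse (1/2 + t + real k)) sums (pi * tan x)"
    using Digamma_half_plus_minus[OF cos_t] by (simp add: x)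
  from sums_divide[OF this, of pi]
  have "(\<lambda>k. (inverse (1/2 - t + real k) - inverse (1/2 + t + real k)) / pi) sums tan x"
    by simp
  moreover have "(inverse (1/2 - t + real k) - inverse (1/2 + t + real k)) / pi =
      8 * x / ((2 * real k + 1)^2 * pi^2 - 4 * x^2)" for k
  proof -
    have "inverse (1/2 - t + real k) - inverse (1/2 + t + real k) =
        2 * t / ((1/2 - t + real k) * (1/2 + t + real k))"
      using nz[of k] by (simp add: field_simps)
    moreover have "(2 * real k + 1)^2 * pi^2 - 4 * x^2 = 4 * pi^2 * ((1/2 - t + real k) * (1/2 + t + real k))"
      by (simp add: x power2_eq_square algebra_simps)
    ultimately show ?thesis
      by (simp add: x power2_eq_square)
  qed
  ultimately show ?thesis
    by simp
qed

lemma sums_odd_tail: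
  fixes f :: "real \<Rightarrow> real"
  assumes "(\<lambda>k. f (2 * real k + 1)) sums s"
  shows "(\<lambda>k. f (2 * real k + 3)) sums (s - f 1)"
proof -
  have "(\<lambda>k. f (2 * real (Suc k) + 1)) sums (s - f 1)"
    using assms sums_Suc_iff[of "\<lambda>k. f (2 * real k + 1)" "s - f 1"] by simp
  moreover have "2 * real (Suc k) + 1 = 2 * real k + 3" for k
    by simp
  ultimately show ?thesis
    by (simp only:)
qed

lemma tan_div_partial_fractions:
  fixes x :: real
  assumes "x \<noteq> 0" "cos x \<noteq> 0"
  shows "(\<lambda>k. 1 / ((2 * real k + 1)^2 - 4 * x^2 / pi^2)) sums (pi^2 * tan x / (8 * x))"
proof -
  have "(\<lambda>k. pi^2 / (8 * x) * (8 * x / ((2 * real k + 1)^2 * pi^2 - 4 * x^2))) sums (pi^2 / (8 * x) * tan x)"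
    using tan_partial_fractions[OF assms(2)] by (rule sums_mult)
  moreover have "pi^2 / (8 * x) * (8 * x / ((2 * real k + 1)^2 * pi^2 - 4 * x^2)) =
      1 / ((2 * real k + 1)^2 - 4 * x^2 / pi^2)" for k
    using assms(1) by (simp add: field_simps)
  ultimately show ?thesis
    by simp
qed

lemma inverse_diff_gt_tangent:
  fixes M u :: real
  assumes "0 < u" "u < M"
  shows "1 / M + u / M^2 < 1 / (M - u)"
proof -
  have "1 / (M - u) - (1 / M + u / M^2) = u^2 / (M^2 * (M - u))"
    using assms by (simp add: field_simps power2_eq_square)
  moreover have "u^2 / (M^2 * (M - u)) > 0"
    using assms by simp
  ultimately show ?thesis
    by linarith
qed

lemma inverse_diff_lt_chord:
  fixes M u :: real
  assumes "1 < M" "0 < u" "u < 1"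
  shows "1 / (M - u) < (1 - u) / M + u / (M - 1)"
proof -
  have "(1 - u) / M + u / (M - 1) - 1 / (M - u) = u * (1 - u) / (M * (M - 1) * (M - u))"
    using assms by (simp add: field_simps)
  moreover have "u * (1 - u) / (M * (M - 1) * (M - u)) > 0"
    using assms by simp
  ultimately show ?thesis
    by linarith
qed

lemma odd_partial_fractions_lower_bound:
  fixes u T :: real
  assumes sums: "(\<lambda>k. 1 / ((2 * real k + 1)^2 - u)) sums T" and u: "0 < u" "u < 1"
  shows "1 / (1 - u) + (pi^2 / 8 - 1) + (pi^4 / 96 - 1) * u < T"
proof -
  have "(\<lambda>k. 1 / (2 * real k + 3)^2) sums (pi^2 / 8 - 1)"
    "(\<lambda>k. 1 / (2 * real k + 3)^4) sums (pi^4 / 96 - 1)"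
    using sums_odd_tail[where f = "\<lambda>m. 1 / m^2"] sums_odd_tail[where f = "\<lambda>m. 1 / m^4"]
      sums_inverse_odd_squares sums_inverse_odd_fourth_powers by simp_all
  then have "(\<lambda>k. 1 / (2 * real k + 3)^2 + u * (1 / (2 * real k + 3)^4)) sums
      ((pi^2 / 8 - 1) + u * (pi^4 / 96 - 1))"
    by (intro sums_mult sums_add)
  moreover have "(\<lambda>k. 1 / ((2 * real k + 3)^2 - u)) sums (T - 1 / (1 - u))"
    using sums_odd_tail[where f = "\<lambda>m. 1 / (m^2 - u)", OF sums] by simp
  moreover have "1 / (2 * real k + 3)^2 + u * (1 / (2 * real k + 3)^4) < 1 / ((2 * real k + 3)^2 - u)"
    for k
  proof -
    have "1 < (2 * real k + 3)^2"
      by (rule one_less_power) auto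
    then have "u < (2 * real k + 3)^2"
      using u by linarith
    from inverse_diff_gt_tangent[OF u(1) this] show ?thesis
      by (simp flip: power_mult)
  qed
  ultimately have "(pi^2 / 8 - 1) + u * (pi^4 / 96 - 1) < T - 1 / (1 - u)"
    by (rule sums_less)
  then show ?thesis
    by (simp add: algebra_simps)
qed

lemma odd_partial_fractions_upper_bound:
  fixes u T :: real
  assumes sums: "(\<lambda>k. 1 / ((2 * real k + 1)^2 - u)) sums T" and u: "0 < u" "u < 1"
  shows "T < 1 / (1 - u) + (pi^2 / 8 - 1) * (1 - u) + u / 4"
proof -
  have odd_squares: "(\<lambda>k. 1 / (2 * real k + 3)^2) sums (pi^2 / 8 - 1)"
    using sums_odd_tail[where f = "\<lambda>m. 1 / m^2"] sums_inverse_odd_squares by simp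
  have "(\<lambda>k. 1 / ((2 * real k + 3)^2 - u)) sums (T - 1 / (1 - u))"
    using sums_odd_tail[where f = "\<lambda>m. 1 / (m^2 - u)", OF sums] by simp
  moreover have "(\<lambda>k. (1 - u) * (1 / (2 * real k + 3)^2) + u * (1 / ((2 * real k + 3)^2 - 1))) sums
      ((1 - u) * (pi^2 / 8 - 1) + u * (1/4))"
    using odd_squares sums_inverse_odd_squares_minus_one by (intro sums_mult sums_add)
  moreover have "1 / ((2 * real k + 3)^2 - u) <
      (1 - u) * (1 / (2 * real k + 3)^2) + u * (1 / ((2 * real k + 3)^2 - 1))" for k
  proof -
    have "1 < (2 * real k + 3)^2"
      by (rule one_less_power) auto
    from inverse_diff_lt_chord[OF this u] show ?thesis
      by simp
  qed
  ultimately have "T - 1 / (1 - u) < (1 - u) * (pi^2 / 8 - 1) + u * (1/4)"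
    by (rule sums_less)
  then show ?thesis
    by (simp add: algebra_simps)
qed

theorem mainTheorem15:
  fixes x :: real
  assumes "0 < x" and "x < pi / 2"
  shows "(pi^2 + ((pi^2 - 12) / 3) * x^2 + ((384 - 4 * pi^4) / (3 * pi^4)) * x^4) / (pi^2 - 4 * x^2)
           < tan x / x \<and>
         tan x / x
           < (pi^2 + ((72 - 8 * pi^2) / pi^2) * x^2 + ((16 * pi^2 - 160) / pi^4) * x^4) / (pi^2 - 4 * x^2)"
proof -
  define u where "u = 4 * x^2 / pi^2"
  define T where "T = pi^2 * tan x / (8 * x)"
  have "4 * x^2 < pi^2"
    using power_strict_mono[of "2 * x" pi 2] assms by (simp add: power_mult_distrib)
  then have u: "0 < u" "u < 1"
    using assms by (simp_all add: u_def)
  have "cos x \<noteq> 0"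
    using assms by (intro cos_gt_zero_pi[THEN less_imp_neq, symmetric]) auto
  with assms(1) have sums: "(\<lambda>k. 1 / ((2 * real k + 1)^2 - u)) sums T"
    unfolding u_def T_def by (intro tan_div_partial_fractions) auto
  have "(pi^2 + ((pi^2 - 12) / 3) * x^2 + ((384 - 4 * pi^4) / (3 * pi^4)) * x^4) / (pi^2 - 4 * x^2) =
      8 / pi^2 * (1 / (1 - u) + (pi^2 / 8 - 1) + (pi^4 / 96 - 1) * u)"
    and "(pi^2 + ((72 - 8 * pi^2) / pi^2) * x^2 + ((16 * pi^2 - 160) / pi^4) * x^4) / (pi^2 - 4 * x^2) =
      8 / pi^2 * (1 / (1 - u) + (pi^2 / 8 - 1) * (1 - u) + u / 4)"
    and "tan x / x = 8 / pi^2 * T"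
    using assms u \<open>4 * x^2 < pi^2\<close>
    by (simp_all add: u_def T_def field_simps power4_eq_xxxx power2_eq_square)
  moreover have "8 / pi^2 * (1 / (1 - u) + (pi^2 / 8 - 1) + (pi^4 / 96 - 1) * u) < 8 / pi^2 * T"
    by (rule mult_strict_left_mono[OF odd_partial_fractions_lower_bound[OF sums u]]) simp
  moreover have "8 / pi^2 * T < 8 / pi^2 * (1 / (1 - u) + (pi^2 / 8 - 1) * (1 - u) + u / 4)"
    by (rule mult_strict_left_mono[OF odd_partial_fractions_upper_bound[OF sums u]]) simp
  ultimately show ?thesis
    by simp
qed

end
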